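(* Consider the $n$-body problem in ${\bf S}^2$ with $n$ odd and all masses equal. Suppose ${\bf q}_i(t)=(r_i\cos(\omega t+\alpha_i), r_i\sin(\omega t+\alpha_i), z_i)$, $i=1,\dots,n$, with constants $\omega\ne0$, $\alpha_i$, $z_i\in[-1,1]$, $r_i=(1-z_i^2)^{1/2}$, is a solution of the equations of motion such that at every time the bodies are at the vertices of a regular $n$-gon inscribed in a great circle of ${\bf S}^2$. Then $z_i=0$ (i.e. $r_i=1$) for all $i$: the $n$-gon lies in, and rotates within, the great circle orthogonal to the rotation axis.
   Context: The $n$-body problem in ${\bf S}^2$: bodies of masses $m_1,\dots,m_n>0$ have positions ${\bf q}_i=(x_i,y_i,z_i)\in\mathbb R^3$ on the unit sphere ${\bf S}^2=\{{\bf q}:{\bf q}\cdot{\bf q}=1\}$ ($\cdot$ the Euclidean inner product), and satisfy $$\ddot{\bf q}_i=\sum_{j\ne i}\frac{m_j[{\bf q}_j-({\bf q}_i\cdot{\bf q}_j){\bf q}_i]}{[1-({\bf q}_i\cdot{\bf q}_j)^2]^{3/2}}-(\dot{\bf q}_i\cdot\dot{\bf q}_i){\bf q}_i,\qquad {\bf q}_i\cdot{\bf q}_i=1,\ \ {\bf q}_i\cdot\dot{\bf q}_i=0,$$ $i=1,\dots,n$, defined only for configurations with $({\bf q}_i\cdot{\bf q}_j)^2\ne 1$ for all $i\ne j$. *)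

theory Defs
  imports "HOL-Analysis.Analysis"
begin

definition sphere_force ::
  "nat \<Rightarrow> (nat \<Rightarrow> real) \<Rightarrow> (nat \<Rightarrow> real^3) \<Rightarrow> (nat \<Rightarrow> real^3) \<Rightarrow> nat \<Rightarrow> real^3" where
  "sphere_force n m q v i =
     (\<Sum>j\<in>{1..n} - {i}. (m j / ((1 - (q i \<bullet> q j)^2) powr (3/2))) *\<^sub>R (q j - (q i \<bullet> q j) *\<^sub>R q i))
     - (v i \<bullet> v i) *\<^sub>R q i"

definition is_sphere_nbody_solution ::
  "nat \<Rightarrow> (nat \<Rightarrow> real) \<Rightarrow> (nat \<Rightarrow> real \<Rightarrow> real^3) \<Rightarrow> bool" where
  "is_sphere_nbody_solution n m q \<longleftrightarrow>
     (\<exists>v a :: nat \<Rightarrow> real \<Rightarrow> real^3. \<forall>t.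
        (\<forall>i\<in>{1..n}. \<forall>j\<in>{1..n}. i \<noteq> j \<longrightarrow> (q i t \<bullet> q j t)^2 \<noteq> 1) \<and>
        (\<forall>i\<in>{1..n}.
           (q i has_vector_derivative v i t) (at t) \<and>
           (v i has_vector_derivative a i t) (at t) \<and>
           q i t \<bullet> q i t = 1 \<and> q i t \<bullet> v i t = 0 \<and>
           a i t = sphere_force n m (\<lambda>k. q k t) (\<lambda>k. v k t) i))"

definition regular_gon_on_great_circle :: "nat \<Rightarrow> (nat \<Rightarrow> real^3) \<Rightarrow> bool" where
  "regular_gon_on_great_circle n p \<longleftrightarrow>
     (\<exists>u w :: real^3. \<exists>\<phi>::real. norm u = 1 \<and> norm w = 1 \<and> u \<bullet> w = 0 \<and>
        p ` {1..n} = (\<lambda>k. cos (\<phi> + 2 * pi * real k / real n) *\<^sub>R u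
                         + sin (\<phi> + 2 * pi * real k / real n) *\<^sub>R w) ` {..<n})"

end

theory Submission
  imports Defs
begin

(* At every time the bodies form a regular polygon on a
   great circle.  Such a vertex set is invariant under the reflection
   y \<mapsto> 2 (x \<bullet> y) x - y through each of its vertices x, and this reflection
   reverses the tangential component of y at x while preserving x \<bullet> y; hence
   the gravitational attraction on every body cancels (equal masses).  The
   equation of motion then says the acceleration of body i is purely
   centripetal, -|v_i|^2 q_i.  For a body rotating uniformly about the z-axis
   at height z_i the acceleration is horizontal, so its vertical component
   gives r_i^2 \<omega>^2 z_i = 0, i.e. z_i = 0 or the body sits at a pole.
   A body at a pole would be orthogonal to every non-polar body and antipodal
   or equal to every polar one; the latter is a collision-singularity, and
   being orthogonal to two distinct vertices of a great circle forces those
   two to be antipodal, again a singularity (here n \<ge> 3 is used). *)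

section \<open>Points on a great circle\<close>

definition circle_point :: "'a::real_inner \<Rightarrow> 'a \<Rightarrow> real \<Rightarrow> 'a" where
  "circle_point u w \<theta> = cos \<theta> *\<^sub>R u + sin \<theta> *\<^sub>R w"

lemma inner_circle_point:
  fixes u w :: "'a::real_inner"
  assumes "u \<bullet> u = 1" "w \<bullet> w = 1" "u \<bullet> w = 0"
  shows "circle_point u w a \<bullet> circle_point u w b = cos (b - a)"
  using assms by (simp add: circle_point_def inner_add_left inner_add_right inner_commute
      cos_diff algebra_simps)

lemma circle_point_shift:
  "circle_point u w (\<theta> + 2 * pi * of_int k) = circle_point u w \<theta>"
proof -
  have "sin (\<theta> + 2 * pi * of_int k) = sin \<theta> \<and> cos (\<theta> + 2 * pi * of_int k) = cos \<theta>"
    using sin_cos_eq_iff by blast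
  then show ?thesis by (simp add: circle_point_def)
qed

lemma circle_point_reflection:
  fixes u w :: "'a::real_inner"
  assumes "u \<bullet> u = 1" "w \<bullet> w = 1" "u \<bullet> w = 0"
  shows "(2 * (circle_point u w a \<bullet> circle_point u w b)) *\<^sub>R circle_point u w a
           - circle_point u w b = circle_point u w (2 * a - b)"
proof -
  have "2 * cos (b - a) * cos a - cos b = cos (2 * a - b)"
    and "2 * cos (b - a) * sin a - sin b = sin (2 * a - b)"
    using cos_add[of a "a - b"] cos_diff[of a "a - b"] sin_add[of a "a - b"] sin_diff[of a "a - b"]
    by (simp_all add: cos_diff sin_diff algebra_simps)
  then show ?thesis
    unfolding inner_circle_point[OF assms] by (simp add: circle_point_def algebra_simps)
qed

lemma circle_point_common_orthogonal:
  fixes u w :: "'a::real_inner"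
  assumes "u \<bullet> u = 1" "w \<bullet> w = 1" "u \<bullet> w = 0"
    and "circle_point u w a \<bullet> circle_point u w b = 0"
    and "circle_point u w a \<bullet> circle_point u w c = 0"
  shows "(circle_point u w b \<bullet> circle_point u w c)^2 = 1"
proof -
  have ba: "cos (b - a) = 0" and ca: "cos (c - a) = 0"
    using assms(4,5) unfolding inner_circle_point[OF assms(1-3)] .
  have "cos (c - b) = cos ((c - a) - (b - a))" by simp
  also have "\<dots> = sin (c - a) * sin (b - a)" using cos_diff[of "c - a" "b - a"] ba ca by simp
  finally have "(cos (c - b))^2 = (sin (c - a))^2 * (sin (b - a))^2"
    by (simp add: power_mult_distrib)
  also have "\<dots> = 1" using sin_squared_eq[of "c - a"] sin_squared_eq[of "b - a"] ba ca by simp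
  finally show ?thesis unfolding inner_circle_point[OF assms(1-3)] .
qed

section \<open>Regular polygons on a great circle\<close>

lemma regular_gon_circle_form:
  assumes "regular_gon_on_great_circle n p"
  shows "\<exists>u w \<phi>. u \<bullet> u = 1 \<and> w \<bullet> w = 1 \<and> u \<bullet> w = 0 \<and>
           p ` {1..n} = (\<lambda>k. circle_point u w (\<phi> + 2 * pi * real k / real n)) ` {..<n}"
  using assms unfolding regular_gon_on_great_circle_def circle_point_def norm_eq_1 by blast

lemma regular_gon_unit:
  assumes "regular_gon_on_great_circle n p" and "i \<in> {1..n}"
  shows "p i \<bullet> p i = 1"
proof -
  obtain u w \<phi> where uw: "u \<bullet> u = 1" "w \<bullet> w = 1" "u \<bullet> w = 0"
    and V: "p ` {1..n} = (\<lambda>k. circle_point u w (\<phi> + 2 * pi * real k / real n)) ` {..<n}"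
    using regular_gon_circle_form[OF assms(1)] by blast
  obtain \<theta> where "p i = circle_point u w \<theta>" using V assms(2) by blast
  then show ?thesis using inner_circle_point[OF uw, of \<theta> \<theta>] by simp
qed

lemma regular_gon_reflection_closed:
  assumes "regular_gon_on_great_circle n p" and "n > 0"
    and "x \<in> p ` {1..n}" and "y \<in> p ` {1..n}"
  shows "(2 * (x \<bullet> y)) *\<^sub>R x - y \<in> p ` {1..n}"
proof -
  obtain u w \<phi> where uw: "u \<bullet> u = 1" "w \<bullet> w = 1" "u \<bullet> w = 0"
    and V: "p ` {1..n} = (\<lambda>k. circle_point u w (\<phi> + 2 * pi * real k / real n)) ` {..<n}"
    using regular_gon_circle_form[OF assms(1)] by blast
  define \<theta> where "\<theta> k = \<phi> + 2 * pi * real_of_int k / real n" for k :: int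
  obtain a b :: nat where x: "x = circle_point u w (\<theta> a)" and y: "y = circle_point u w (\<theta> b)"
    using assms(3,4) unfolding V \<theta>_def by auto
  define d where "d = 2 * int a - int b"
  define k where "k = nat (d mod int n)"
  have k: "k < n" "int k = d mod int n"
    using assms(2) by (simp_all add: k_def nat_less_iff)
  have "2 * \<theta> a - \<theta> b = \<theta> d"
    using assms(2) by (simp add: \<theta>_def d_def field_simps)
  also have "\<theta> d = \<theta> k + 2 * pi * of_int (d div int n)"
  proof -
    have "real_of_int d = real n * of_int (d div int n) + real k"
      using k(2) by (metis of_int_add of_int_mult of_int_of_nat_eq div_mult_mod_eq mult.commute)
    then show ?thesis using assms(2) by (simp add: \<theta>_def field_simps)
  qed
  finally have "(2 * (x \<bullet> y)) *\<^sub>R x - y = circle_point u w (\<theta> k + 2 * pi * of_int (d div int n))"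
    unfolding x y circle_point_reflection[OF uw] by simp
  then have "(2 * (x \<bullet> y)) *\<^sub>R x - y = circle_point u w (\<theta> k)"
    by (simp only: circle_point_shift)
  then show ?thesis using k(1) unfolding V \<theta>_def by auto
qed

lemma regular_gon_not_orthogonal_to_all:
  assumes "regular_gon_on_great_circle n p" and "n \<ge> 3"
    and noncollinear: "\<And>i j. i \<in> {1..n} \<Longrightarrow> j \<in> {1..n} \<Longrightarrow> i \<noteq> j \<Longrightarrow> (p i \<bullet> p j)^2 \<noteq> 1"
    and "i \<in> {1..n}"
  shows "\<exists>j\<in>{1..n}. j \<noteq> i \<and> p i \<bullet> p j \<noteq> 0"
proof (rule ccontr)
  assume orth: "\<not> ?thesis"
  obtain u w \<phi> where uw: "u \<bullet> u = 1" "w \<bullet> w = 1" "u \<bullet> w = 0"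
    and V: "p ` {1..n} = (\<lambda>k. circle_point u w (\<phi> + 2 * pi * real k / real n)) ` {..<n}"
    using regular_gon_circle_form[OF assms(1)] by blast
  have on_circle: "\<exists>\<theta>. p j = circle_point u w \<theta>" if "j \<in> {1..n}" for j
    using that V by blast
  define j1 where "j1 = (if i = 1 then 2 else (1::nat))"
  define j2 where "j2 = (if i = 3 then 2 else (3::nat))"
  have j: "j1 \<in> {1..n}" "j2 \<in> {1..n}" "j1 \<noteq> i" "j2 \<noteq> i" "j1 \<noteq> j2"
    using assms(2,4) by (auto simp: j1_def j2_def)
  obtain a b c where "p i = circle_point u w a" "p j1 = circle_point u w b" "p j2 = circle_point u w c"
    using on_circle assms(4) j(1,2) by metis
  moreover have "p i \<bullet> p j1 = 0" "p i \<bullet> p j2 = 0" using orth j by auto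
  ultimately have "(p j1 \<bullet> p j2)^2 = 1" using circle_point_common_orthogonal[OF uw] by simp
  then show False using noncollinear j by blast
qed

section \<open>Cancellation of the gravitational forces\<close>

text \<open>If a finite set G is invariant under the reflection R y = 2 (x \<bullet> y) x - y
  through the unit vector x \<in> G, then any sum over G - {x} of tangential components
  at x weighted by a function of x \<bullet> y vanishes: R permutes G - {x}, fixes the
  weights and reverses the tangential components.\<close>
lemma reflection_symmetric_sum_vanishes:
  fixes x :: "'a::real_inner" and c :: "real \<Rightarrow> real"
  assumes "finite G" and "x \<in> G" and "x \<bullet> x = 1"
    and closed: "\<And>y. y \<in> G \<Longrightarrow> (2 * (x \<bullet> y)) *\<^sub>R x - y \<in> G"
  shows "(\<Sum>y\<in>G - {x}. c (x \<bullet> y) *\<^sub>R (y - (x \<bullet> y) *\<^sub>R x)) = 0"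
proof -
  define R where "R y = (2 * (x \<bullet> y)) *\<^sub>R x - y" for y
  define h where "h y = c (x \<bullet> y) *\<^sub>R (y - (x \<bullet> y) *\<^sub>R x)" for y
  have inner_R: "x \<bullet> R y = x \<bullet> y" for y
    using assms(3) by (simp add: R_def inner_diff_right)
  have involution: "R (R y) = y" for y
    using assms(3) by (simp add: R_def inner_R[unfolded R_def] algebra_simps)
  have maps: "R y \<in> G \<and> R y \<noteq> x" if "y \<in> G" "y \<noteq> x" for y
  proof -
    have "R x = x" using assms(3) by (simp add: R_def scaleR_2)
    then have "R y \<noteq> x" using involution[of y] that by force
    then show ?thesis using closed that by (simp add: R_def)
  qed
  have reverses: "h (R y) = - h y" for y
  proof -
    have "(2 * (x \<bullet> y)) *\<^sub>R x = (x \<bullet> y) *\<^sub>R x + (x \<bullet> y) *\<^sub>R x"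
      by (metis mult_2 scaleR_add_left)
    then have "R y - (x \<bullet> y) *\<^sub>R x = - (y - (x \<bullet> y) *\<^sub>R x)"
      unfolding R_def by simp
    then show ?thesis by (simp add: h_def inner_R flip: scaleR_minus_right)
  qed
  have "sum h (G - {x}) = sum (h \<circ> R) (G - {x})"
    by (rule sum.reindex_bij_witness[where i=R and j=R]) (simp_all add: involution maps)
  also have "\<dots> = - sum h (G - {x})" by (simp add: reverses sum_negf)
  finally have "(2::real) *\<^sub>R sum h (G - {x}) = 0" by (metis eq_neg_iff_add_eq_0 scaleR_2)
  then show ?thesis by (simp add: h_def)
qed

lemma regular_gon_force_centripetal:
  fixes p v :: "nat \<Rightarrow> real^3"
  assumes gon: "regular_gon_on_great_circle n p" and "n > 0"
    and noncollinear: "\<And>i j. i \<in> {1..n} \<Longrightarrow> j \<in> {1..n} \<Longrightarrow> i \<noteq> j \<Longrightarrow> (p i \<bullet> p j)^2 \<noteq> 1"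
    and equal_masses: "\<And>j. j \<in> {1..n} \<Longrightarrow> m j = \<mu>"
    and i: "i \<in> {1..n}"
  shows "sphere_force n m p v i = - (v i \<bullet> v i) *\<^sub>R p i"
proof -
  define c where "c s = \<mu> / ((1 - s^2) powr (3/2))" for s :: real
  define h where "h y = c (p i \<bullet> y) *\<^sub>R (y - (p i \<bullet> y) *\<^sub>R p i)" for y
  have inj: "inj_on p {1..n}"
    by (rule inj_onI) (metis noncollinear regular_gon_unit[OF gon] power_one)
  have "(\<Sum>j\<in>{1..n} - {i}. (m j / ((1 - (p i \<bullet> p j)^2) powr (3/2))) *\<^sub>R (p j - (p i \<bullet> p j) *\<^sub>R p i))
      = (\<Sum>j\<in>{1..n} - {i}. h (p j))"
    by (rule sum.cong) (simp_all add: h_def c_def equal_masses)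
  also have "\<dots> = sum h (p ` ({1..n} - {i}))"
    using sum.reindex[OF inj_on_subset[OF inj Diff_subset], of h] by (simp add: comp_def)
  also have "p ` ({1..n} - {i}) = p ` {1..n} - {p i}"
    using inj_on_image_set_diff[OF inj, of "{1..n}" "{i}"] i by simp
  also have "sum h (p ` {1..n} - {p i}) = 0"
    unfolding h_def using i
    by (intro reflection_symmetric_sum_vanishes regular_gon_unit[OF gon]
        regular_gon_reflection_closed[OF gon \<open>n > 0\<close>]) auto
  finally show ?thesis by (simp add: sphere_force_def)
qed

section \<open>Uniformly rotating bodies\<close>

lemma vector_derivative_component:
  fixes f :: "real \<Rightarrow> real^'n"
  assumes "(f has_vector_derivative f') (at t)" and "\<And>s. f s $ k = g s"
    and "(g has_real_derivative g') (at t)"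
  shows "f' $ k = g'"
proof -
  have "((\<lambda>s. f s $ k) has_vector_derivative f' $ k) (at t)"
    by (rule bounded_linear.has_vector_derivative[OF bounded_linear_vec_nth assms(1)])
  then have "(g has_vector_derivative f' $ k) (at t)" using assms(2) by simp
  moreover have "(g has_vector_derivative g') (at t)"
    using assms(3) by (simp add: has_real_derivative_iff_has_vector_derivative)
  ultimately show ?thesis by (rule vector_derivative_unique_at)
qed

lemma uniform_rotation_kinematics:
  fixes q v :: "real \<Rightarrow> real^3"
  assumes q: "\<And>s. q s = vector [r * cos (\<omega> * s + \<alpha>), r * sin (\<omega> * s + \<alpha>), z]"
    and vel: "\<And>s. (q has_vector_derivative v s) (at s)"
    and acc: "(v has_vector_derivative A) (at t)"
  shows "v t \<bullet> v t = r^2 * \<omega>^2" and "A $ 3 = 0"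
proof -
  have v1: "v s $ 1 = - (r * \<omega> * sin (\<omega> * s + \<alpha>))"
    and v2: "v s $ 2 = r * \<omega> * cos (\<omega> * s + \<alpha>)"
    and v3: "v s $ 3 = 0" for s
    by (rule vector_derivative_component[OF vel], simp add: q, auto intro!: derivative_eq_intros)+
  have "v t \<bullet> v t = (r * \<omega> * sin (\<omega> * t + \<alpha>))^2 + (r * \<omega> * cos (\<omega> * t + \<alpha>))^2"
    by (simp add: inner_vec_def sum_3 v1 v2 v3 power2_eq_square)
  also have "\<dots> = r^2 * \<omega>^2 * ((sin (\<omega> * t + \<alpha>))^2 + (cos (\<omega> * t + \<alpha>))^2)"
    by (simp only: power_mult_distrib distrib_left)
  finally show "v t \<bullet> v t = r^2 * \<omega>^2" by simp
  show "A $ 3 = 0"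
    by (rule vector_derivative_component[OF acc v3]) (rule DERIV_const)
qed

lemma centripetal_rotation_equator_or_pole:
  fixes q v :: "real \<Rightarrow> real^3"
  assumes q: "\<And>s. q s = vector [sqrt (1 - z^2) * cos (\<omega> * s + \<alpha>),
                                  sqrt (1 - z^2) * sin (\<omega> * s + \<alpha>), z]"
    and vel: "\<And>s. (q has_vector_derivative v s) (at s)"
    and acc: "(v has_vector_derivative A) (at t)"
    and centripetal: "A = - (v t \<bullet> v t) *\<^sub>R q t"
    and "\<omega> \<noteq> 0" and "z \<in> {-1..1}"
  shows "z = 0 \<or> z^2 = 1"
proof -
  have "0 \<le> 1 - z^2" using \<open>z \<in> {-1..1}\<close> abs_square_le_1[of z] by auto
  then have r2: "(sqrt (1 - z^2))^2 = 1 - z^2" by simp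
  have "0 = A $ 3" using uniform_rotation_kinematics(2)[OF q vel acc] by simp
  also have "\<dots> = - ((1 - z^2) * \<omega>^2) * z"
    unfolding centripetal uniform_rotation_kinematics(1)[OF q vel acc] r2 by (simp add: q)
  finally have "(1 - z^2) * z = 0" using \<open>\<omega> \<noteq> 0\<close> by simp
  then show ?thesis by auto
qed

theorem mainTheorem6:
  fixes n :: nat and m :: "nat \<Rightarrow> real" and \<mu> \<omega> :: real
    and \<alpha> z :: "nat \<Rightarrow> real" and q :: "nat \<Rightarrow> real \<Rightarrow> real^3"
  assumes "odd n" and "n \<ge> 3"
    and "\<mu> > 0" and "\<And>i. i \<in> {1..n} \<Longrightarrow> m i = \<mu>"
    and "\<omega> \<noteq> 0"
    and "\<And>i. i \<in> {1..n} \<Longrightarrow> z i \<in> {-1..1}"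
    and "\<And>i t. i \<in> {1..n} \<Longrightarrow>
           q i t = vector [sqrt (1 - (z i)^2) * cos (\<omega> * t + \<alpha> i),
                           sqrt (1 - (z i)^2) * sin (\<omega> * t + \<alpha> i), z i]"
    and "is_sphere_nbody_solution n m q"
    and "\<And>t. regular_gon_on_great_circle n (\<lambda>i. q i t)"
  shows "\<forall>i\<in>{1..n}. z i = 0"
proof -
  obtain v a :: "nat \<Rightarrow> real \<Rightarrow> real^3" where sol: "\<And>t.
        (\<forall>i\<in>{1..n}. \<forall>j\<in>{1..n}. i \<noteq> j \<longrightarrow> (q i t \<bullet> q j t)^2 \<noteq> 1) \<and>
        (\<forall>i\<in>{1..n}.
           (q i has_vector_derivative v i t) (at t) \<and>
           (v i has_vector_derivative a i t) (at t) \<and>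
           q i t \<bullet> q i t = 1 \<and> q i t \<bullet> v i t = 0 \<and>
           a i t = sphere_force n m (\<lambda>k. q k t) (\<lambda>k. v k t) i)"
    using assms(8) unfolding is_sphere_nbody_solution_def by blast
  define p where "p = (\<lambda>j. q j 0)"
  have gon: "regular_gon_on_great_circle n p" using assms(9) unfolding p_def .
  have noncollinear: "\<And>i j. i \<in> {1..n} \<Longrightarrow> j \<in> {1..n} \<Longrightarrow> i \<noteq> j \<Longrightarrow> (p i \<bullet> p j)^2 \<noteq> 1"
    using sol unfolding p_def by blast
  have equator_or_pole: "z i = 0 \<or> (z i)^2 = 1" if i: "i \<in> {1..n}" for i
  proof (rule centripetal_rotation_equator_or_pole[OF assms(7)[OF i]])
    show "\<And>s. (q i has_vector_derivative v i s) (at s)"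
      and "(v i has_vector_derivative a i 0) (at 0)" using sol i by blast+
    show "a i 0 = - (v i 0 \<bullet> v i 0) *\<^sub>R q i 0"
      using sol i regular_gon_force_centripetal[OF gon _ noncollinear assms(4) i, where v="\<lambda>k. v k 0"]
        assms(2) unfolding p_def by simp
  qed (use i assms(5,6) in auto)
  show ?thesis
  proof (rule ccontr)
    assume "\<not> ?thesis"
    then obtain i where i: "i \<in> {1..n}" and pole: "(z i)^2 = 1" using equator_or_pole by blast
    have pole_inner: "p i \<bullet> p j = z i * z j" if "j \<in> {1..n}" for j
      using pole by (simp add: p_def assms(7)[OF i] assms(7)[OF that] inner_vec_def sum_3)
    obtain j where j: "j \<in> {1..n}" "j \<noteq> i" and "p i \<bullet> p j \<noteq> 0"
      using regular_gon_not_orthogonal_to_all[OF gon assms(2) noncollinear i] by blast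
    then have "(z j)^2 = 1" using equator_or_pole pole_inner by auto
    then have "(p i \<bullet> p j)^2 = 1" using pole pole_inner[OF j(1)] by (simp add: power_mult_distrib)
    then show False using noncollinear[OF i j(1)] j(2) by simp
  qed
qed

end
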